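(* For each prime $p$, the function $n\mapsto\mathrm{ord}_p(\overline{F}_n)$ takes both positive and negative values. More precisely: (1) For every prime $p$, $\mathrm{ord}_p(\overline{F}_p)=p-1>0$. (2) $\mathrm{ord}_2(\overline{F}_7)=-1$. For every odd prime $p$, $\mathrm{ord}_p(\overline{F}_{3p-1})=-\frac{p-1}{2}$, and more generally $\mathrm{ord}_p(\overline{F}_n)<0$ for all integers $n$ with $\frac{8}{3}p\le n\le 3p-1$.
   Context: For a positive integer $n$, $\overline{F}_n=\Big(\prod_{1\le h\le k\le n,\ \gcd(h,k)=1}\frac{h}{k}\Big)^{-1}$ is the reciprocal of the product of all nonzero Farey fractions of order $n$. For a nonzero rational $x$, $\mathrm{ord}_p(x)$ is the exponent of the prime $p$ in $x$ (possibly negative). *)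

theory Defs
  imports "HOL-Computational_Algebra.Computational_Algebra"
begin

definition farey_bar :: "nat \<Rightarrow> rat" where
  "farey_bar n = inverse (\<Prod>(h, k) \<in> {(h, k). 1 \<le> h \<and> h \<le> k \<and> k \<le> n \<and> coprime h k}.
      (of_nat h / of_nat k :: rat))"

definition rat_ord :: "nat \<Rightarrow> rat \<Rightarrow> int" where
  "rat_ord p x = (case quotient_of x of (a, b) \<Rightarrow>
      int (multiplicity (int p) a) - int (multiplicity (int p) b))"

end

theory Submission
  imports Defs "HOL-Number_Theory.Number_Theory"
begin

text \<open>Grouping the Farey fractions into layers of common denominator \<open>k\<close>,
  \<open>ord\<^sub>p(F\<^sub>n) = \<Sum>\<^sub>k\<^sub>\<le>\<^sub>n \<Sum>\<^sub>h (\<nu>\<^sub>p(k) - \<nu>\<^sub>p(h))\<close>, with \<open>h\<close> running over the totatives of \<open>k\<close>.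
  A denominator divisible by \<open>p\<close> contributes \<open>\<phi>(k) \<nu>\<^sub>p(k)\<close>, since its numerators are prime to \<open>p\<close>;
  a denominator \<open>k < p\<^sup>2\<close> prime to \<open>p\<close> contributes minus the number of multiples of \<open>p\<close>
  among its numerators. Below \<open>3p\<close> the contributions are therefore \<open>p - 1\<close> at \<open>k = p\<close>
  and \<open>k = 2p\<close>, \<open>-1\<close> for \<open>p < k < 2p\<close>, and \<open>-1\<close> or \<open>-2\<close> for \<open>2p < k < 3p\<close> according as \<open>k\<close>
  is even or odd, and summing them gives \<open>ord\<^sub>p(F\<^sub>n)\<close> in closed form for \<open>n < 3p\<close>.\<close>

lemma multiplicity_of_nat_of_nat:
  "multiplicity (int p) (int k) = multiplicity p k"
  unfolding multiplicity_def
  by (simp add: of_nat_power[symmetric] of_nat_dvd_iff del: of_nat_power)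

lemma rat_ord_of_int_divide:
  assumes p: "prime p" and a: "a \<noteq> 0" and b: "b \<noteq> 0"
  shows "rat_ord p (of_int a / of_int b) = int (multiplicity (int p) a) - int (multiplicity (int p) b)"
proof -
  obtain a' b' where q: "quotient_of (of_int a / of_int b) = (a', b')"
    by fastforce
  have eq: "(of_int a / of_int b :: rat) = of_int a' / of_int b'" and b': "b' > 0"
    using quotient_of_div[OF q] quotient_of_denom_pos[OF q] by simp_all
  with a b have a': "a' \<noteq> 0" by auto
  from eq b b' have "a * b' = a' * b"
    by (simp add: field_simps flip: of_int_mult of_int_eq_iff)
  then have "multiplicity (int p) (a * b') = multiplicity (int p) (a' * b)" by simp
  with p a b a' b' have "multiplicity (int p) a + multiplicity (int p) b' =
      multiplicity (int p) a' + multiplicity (int p) b"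
    by (simp add: prime_elem_multiplicity_mult_distrib)
  then show ?thesis unfolding rat_ord_def q by simp
qed

lemma rat_ord_mult:
  assumes p: "prime p" and "x \<noteq> 0" "y \<noteq> 0"
  shows "rat_ord p (x * y) = rat_ord p x + rat_ord p y"
proof -
  obtain a b where x: "quotient_of x = (a, b)" by fastforce
  obtain c d where y: "quotient_of y = (c, d)" by fastforce
  have xy: "x * y = of_int (a * c) / of_int (b * d)" "b > 0" "d > 0"
    using quotient_of_div[OF x] quotient_of_div[OF y] quotient_of_denom_pos[OF x]
      quotient_of_denom_pos[OF y] by simp_all
  with assms have "a * c \<noteq> 0" by auto
  with xy p have "rat_ord p (x * y) =
      int (multiplicity (int p) (a * c)) - int (multiplicity (int p) (b * d))"
    unfolding xy(1) by (intro rat_ord_of_int_divide) auto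
  with xy p \<open>a * c \<noteq> 0\<close> show ?thesis
    by (simp add: rat_ord_def x y prime_elem_multiplicity_mult_distrib)
qed

lemma rat_ord_prod:
  assumes "prime p" "finite A" "\<And>x. x \<in> A \<Longrightarrow> f x \<noteq> 0"
  shows "rat_ord p (\<Prod>x\<in>A. f x) = (\<Sum>x\<in>A. rat_ord p (f x))"
  using assms(2,3)
proof (induction A rule: finite_induct)
  case empty
  have "quotient_of 1 = (1, 1)" by (simp add: quotient_of_int[of 1, simplified])
  then show ?case by (simp add: rat_ord_def)
next
  case (insert x A)
  then show ?case by (simp add: rat_ord_mult[OF \<open>prime p\<close>])
qed

lemma rat_ord_of_nat_divide:
  assumes "prime p" "h > 0" "k > 0"
  shows "rat_ord p (of_nat h / of_nat k) = int (multiplicity p h) - int (multiplicity p k)"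
  using rat_ord_of_int_divide[of p "int h" "int k"] assms
  by (simp add: multiplicity_of_nat_of_nat)

definition farey_layer_ord :: "nat \<Rightarrow> nat \<Rightarrow> int" where
  "farey_layer_ord p k = (\<Sum>h\<in>totatives k. int (multiplicity p k) - int (multiplicity p h))"

lemma farey_pairs_eq_Sigma:
  "{(h, k). 1 \<le> h \<and> h \<le> k \<and> k \<le> n \<and> coprime h k} =
    prod.swap ` (SIGMA k:{1..n}. totatives k)"
  by (auto simp: in_totatives_iff image_iff)

lemma rat_ord_farey_bar:
  assumes p: "prime p"
  shows "rat_ord p (farey_bar n) = (\<Sum>k=1..n. farey_layer_ord p k)"
proof -
  have "farey_bar n = (\<Prod>(k, h)\<in>(SIGMA k:{1..n}. totatives k). of_nat k / of_nat h)"
    unfolding farey_bar_def farey_pairs_eq_Sigma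
    by (simp add: prod.reindex prod_inversef[symmetric] case_prod_beta)
  also have "rat_ord p \<dots> = (\<Sum>(k, h)\<in>(SIGMA k:{1..n}. totatives k).
      int (multiplicity p k) - int (multiplicity p h))"
    by (subst rat_ord_prod[OF p]) (auto intro!: sum.cong rat_ord_of_nat_divide p
        simp: in_totatives_iff)
  also have "\<dots> = (\<Sum>k=1..n. farey_layer_ord p k)"
    by (simp add: sum.Sigma[symmetric] farey_layer_ord_def)
  finally show ?thesis .
qed

lemma rat_ord_farey_bar_Suc:
  "prime p \<Longrightarrow> rat_ord p (farey_bar (Suc n)) = rat_ord p (farey_bar n) + farey_layer_ord p (Suc n)"
  by (simp add: rat_ord_farey_bar)

lemma rat_ord_farey_bar_0: "prime p \<Longrightarrow> rat_ord p (farey_bar 0) = 0"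
  by (simp add: rat_ord_farey_bar)

lemma farey_layer_ord_dvd:
  assumes p: "prime p" and "p dvd k"
  shows "farey_layer_ord p k = int (totient k) * int (multiplicity p k)"
proof -
  have "multiplicity p h = 0" if "h \<in> totatives k" for h
  proof (rule not_dvd_imp_multiplicity_0)
    from that have "coprime h k" by (simp add: in_totatives_iff)
    with p \<open>p dvd k\<close> show "\<not> p dvd h"
      using coprime_common_divisor not_prime_unit by blast
  qed
  then show ?thesis by (simp add: farey_layer_ord_def totient_def)
qed

lemma farey_layer_ord_not_dvd:
  "\<not> p dvd k \<Longrightarrow> farey_layer_ord p k = - (\<Sum>h\<in>totatives k. int (multiplicity p h))"
  by (simp add: farey_layer_ord_def not_dvd_imp_multiplicity_0 sum_negf)

lemma multiplicity_less_square:
  fixes p h :: nat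
  assumes p: "prime p" and "0 < h" "h < p ^ 2"
  shows "multiplicity p h = (if p dvd h then 1 else 0)"
proof (cases "p dvd h")
  case True
  have "\<not> p ^ Suc 1 dvd h"
    using assms(2,3) dvd_imp_le[of "p ^ 2" h] by (auto simp: power2_eq_square)
  with True have "multiplicity p h = 1"
    by (intro multiplicity_eqI) simp_all
  with True show ?thesis by simp
qed (simp add: not_dvd_imp_multiplicity_0)

lemma multiples_in_totatives:
  assumes p: "prime p" and "\<not> p dvd k"
  shows "{h \<in> totatives k. p dvd h} = (*) p ` {m \<in> {1..k div p}. coprime m k}"
proof -
  have "coprime p k" using prime_imp_coprime[OF p \<open>\<not> p dvd k\<close>] .
  have range: "0 < p * m \<and> p * m \<le> k \<longleftrightarrow> m \<in> {1..k div p}" for m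
    using prime_gt_0_nat[OF p] by (auto simp: less_eq_div_iff_mult_less_eq mult.commute)
  show ?thesis
  proof (intro equalityI subsetI)
    fix h assume "h \<in> {h \<in> totatives k. p dvd h}"
    then obtain m where "h = p * m" "0 < p * m" "p * m \<le> k" "coprime (p * m) k"
      by (auto simp: in_totatives_iff)
    with range show "h \<in> (*) p ` {m \<in> {1..k div p}. coprime m k}" by auto
  next
    fix h assume "h \<in> (*) p ` {m \<in> {1..k div p}. coprime m k}"
    then obtain m where "h = p * m" "m \<in> {1..k div p}" "coprime m k" by auto
    with range \<open>coprime p k\<close> show "h \<in> {h \<in> totatives k. p dvd h}"
      by (auto simp: in_totatives_iff)
  qed
qed

lemma farey_layer_ord_less_square:
  assumes p: "prime p" and "\<not> p dvd k" "k < p ^ 2"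
  shows "farey_layer_ord p k = - int (card {m \<in> {1..k div p}. coprime m k})"
proof -
  have "(\<Sum>h\<in>totatives k. int (multiplicity p h)) = (\<Sum>h\<in>totatives k. if p dvd h then 1 else 0)"
    using assms by (intro sum.cong) (auto simp: in_totatives_iff multiplicity_less_square)
  also have "\<dots> = int (card {h \<in> totatives k. p dvd h})"
    by (simp add: sum.If_cases Int_def)
  also have "\<dots> = int (card {m \<in> {1..k div p}. coprime m k})"
    using prime_gt_0_nat[OF p]
    by (simp add: multiples_in_totatives[OF assms(1,2)] card_image inj_on_def)
  finally show ?thesis
    using farey_layer_ord_not_dvd[OF assms(2)] by simp
qed

lemma not_dvd_strictly_between_multiples:
  fixes p k m :: nat
  assumes "m * p < k" "k < Suc m * p"
  shows "\<not> p dvd k"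
proof
  assume "p dvd k"
  then obtain q where "k = q * p" by (metis dvd_def mult.commute)
  with assms have "m * p < q * p" "q * p < Suc m * p" by simp_all
  then have "m < q" "q < Suc m" unfolding mult_less_cancel2 by simp_all
  then show False by simp
qed

lemma farey_layer_ord_less_2p:
  assumes p: "prime p" and "0 < k" "k < 2 * p"
  shows "farey_layer_ord p k = (if k < p then 0 else if k = p then int p - 1 else -1)"
proof (cases "k = p")
  case True
  with p prime_ge_1_nat[OF p] show ?thesis
    by (simp add: farey_layer_ord_dvd totient_prime multiplicity_self)
next
  case False
  define m where "m = (if k < p then 0 else 1 :: nat)"
  from assms False have between: "m * p \<le> k" "k < Suc m * p" "m * p \<noteq> k"
    by (auto simp: m_def)
  have "2 * p \<le> p ^ 2"
    using prime_ge_2_nat[OF p] by (simp add: power2_eq_square)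
  with assms have "k < p ^ 2" by linarith
  moreover have "\<not> p dvd k"
    using between by (intro not_dvd_strictly_between_multiples[of m]) simp_all
  moreover have "{m \<in> {1..k div p}. coprime m k} = (if k < p then {} else {1})"
  proof -
    have "k div p = m"
      using between by (intro div_nat_eqI) (simp_all add: mult.commute)
    then show ?thesis by (auto simp: m_def)
  qed
  ultimately show ?thesis
    using False by (simp add: farey_layer_ord_less_square[OF p])
qed

lemma odd_prime_ge_3: "prime (p::nat) \<Longrightarrow> odd p \<Longrightarrow> 3 \<le> p"
  using prime_ge_2_nat[of p] by (cases "p = 2") auto

lemma farey_layer_ord_2p_3p:
  assumes p: "prime p" and "odd p" and "2 * p \<le> k" "k < 3 * p"
  shows "farey_layer_ord p k = (if k = 2 * p then int p - 1 else if odd k then -2 else -1)"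
proof (cases "k = 2 * p")
  case True
  have "\<not> p dvd 2"
    using p \<open>odd p\<close> primes_dvd_imp_eq[OF p two_is_prime_nat] by auto
  then have "multiplicity p (2 * p) = 1"
    using p prime_gt_0_nat[OF p]
    by (simp add: prime_elem_multiplicity_mult_distrib multiplicity_self not_dvd_imp_multiplicity_0)
  with True p \<open>odd p\<close> prime_ge_1_nat[OF p] show ?thesis
    by (simp add: farey_layer_ord_dvd totient_double totient_prime)
next
  case False
  have "3 * p \<le> p ^ 2"
    using odd_prime_ge_3[OF p \<open>odd p\<close>] by (simp add: power2_eq_square)
  with assms have "k < p ^ 2" by linarith
  moreover have "\<not> p dvd k"
    using assms False by (intro not_dvd_strictly_between_multiples[of 2]) simp_all
  moreover have "{m \<in> {1..k div p}. coprime m k} = (if odd k then {1, 2} else {1})"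
  proof -
    have "k div p = 2"
      using assms by (intro div_nat_eqI) (simp_all add: mult.commute)
    moreover have "{1..2} = {1, 2 :: nat}" by auto
    ultimately show ?thesis by auto
  qed
  ultimately show ?thesis
    using False by (simp add: farey_layer_ord_less_square[OF p])
qed

lemma rat_ord_farey_bar_less_2p:
  assumes p: "prime p" and "n < 2 * p"
  shows "rat_ord p (farey_bar n) = (if n < p then 0 else 2 * int p - 1 - int n)"
  using \<open>n < 2 * p\<close>
proof (induction n)
  case 0
  show ?case using p by (simp add: rat_ord_farey_bar_0 prime_gt_0_nat)
next
  case (Suc n)
  then show ?case
    using p by (auto simp: rat_ord_farey_bar_Suc farey_layer_ord_less_2p)
qed

lemma rat_ord_farey_bar_2p_3p:
  assumes p: "prime p" and "odd p" and "2 * p \<le> n" "n < 3 * p"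
  shows "rat_ord p (farey_bar n) = 3 * int p - 1 - int n - (int n - 2 * int p + 1) div 2"
  using assms(3,4)
proof (induction n rule: dec_induct)
  case base
  have "2 * p = Suc (2 * p - 1)" using prime_gt_0_nat[OF p] by simp
  then have "rat_ord p (farey_bar (2 * p)) =
      rat_ord p (farey_bar (2 * p - 1)) + farey_layer_ord p (2 * p)"
    by (metis p rat_ord_farey_bar_Suc)
  then show ?case
    using p \<open>odd p\<close> prime_gt_0_nat[OF p]
    by (simp add: rat_ord_farey_bar_less_2p farey_layer_ord_2p_3p)
next
  case (step n)
  then show ?case
    using p \<open>odd p\<close>
    by (simp add: rat_ord_farey_bar_Suc farey_layer_ord_2p_3p)
qed

lemma rat_ord_farey_bar_self:
  assumes "prime p"
  shows "rat_ord p (farey_bar p) = int p - 1"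
proof -
  have "p < 2 * p" using prime_gt_0_nat[OF assms] by simp
  with assms show ?thesis by (simp add: rat_ord_farey_bar_less_2p)
qed

lemma rat_ord_farey_bar_3p_minus_1:
  assumes "prime p" "odd p"
  shows "rat_ord p (farey_bar (3 * p - 1)) = - ((int p - 1) div 2)"
  using rat_ord_farey_bar_2p_3p[OF assms, of "3 * p - 1"] odd_prime_ge_3[OF assms] \<open>odd p\<close>
  by (auto simp: of_nat_diff elim!: oddE)

lemma rat_ord_farey_bar_neg:
  assumes "prime p" "odd p" "8 * p \<le> 3 * n" "n < 3 * p"
  shows "rat_ord p (farey_bar n) < 0"
  using rat_ord_farey_bar_2p_3p[OF assms(1,2), of n] odd_prime_ge_3[OF assms(1,2)] assms(3,4)
  by simp

lemma rat_ord_2_farey_bar_7: "rat_ord 2 (farey_bar 7) = -1"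
proof -
  have \<nu>: "multiplicity (2::nat) 1 = 0" "multiplicity (2::nat) 2 = 1"
    "multiplicity (2::nat) 3 = 0" "multiplicity (2::nat) 4 = 2"
    "multiplicity (2::nat) 5 = 0" "multiplicity (2::nat) 6 = 1"
    using multiplicity_prime_power[of "2::nat" 2] multiplicity_times_same[where p = "2::nat" and x = 3]
    by (simp_all add: multiplicity_self not_dvd_imp_multiplicity_0)
  have "totatives 5 = {1, 2, 3, 4}" "totatives 7 = {1, 2, 3, 4, 5, 6}"
    by (auto simp: totatives_prime)
  then have layers: "farey_layer_ord 2 4 = 4" "farey_layer_ord 2 5 = -3"
    "farey_layer_ord 2 6 = 2" "farey_layer_ord 2 7 = -4"
    by (simp_all add: farey_layer_ord_dvd farey_layer_ord_not_dvd \<nu>)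
  have "rat_ord 2 (farey_bar 3) = 0"
    by (simp add: rat_ord_farey_bar_less_2p)
  with layers show ?thesis
    using rat_ord_farey_bar_Suc[of 2 3] rat_ord_farey_bar_Suc[of 2 4]
      rat_ord_farey_bar_Suc[of 2 5] rat_ord_farey_bar_Suc[of 2 6]
    by simp
qed

lemma ex_rat_ord_farey_bar_neg:
  assumes "prime p"
  shows "\<exists>n. n \<ge> 1 \<and> rat_ord p (farey_bar n) < 0"
proof (cases "p = 2")
  case True
  then show ?thesis using rat_ord_2_farey_bar_7 by (intro exI[of _ 7]) simp
next
  case False
  with prime_ge_2_nat[OF assms] have "p > 2" by simp
  with assms have "odd p" by (rule prime_odd_nat)
  with assms have "3 \<le> p" by (rule odd_prime_ge_3)
  then have "1 \<le> 3 * p - 1" "8 * p \<le> 3 * (3 * p - 1)" "3 * p - 1 < 3 * p" by auto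
  with assms \<open>odd p\<close> show ?thesis
    by (intro exI[of _ "3 * p - 1"]) (simp add: rat_ord_farey_bar_neg)
qed

theorem theorem4p10:
  shows "(\<forall>p::nat. prime p \<longrightarrow>
            (\<exists>n. n \<ge> 1 \<and> rat_ord p (farey_bar n) > 0) \<and>
            (\<exists>n. n \<ge> 1 \<and> rat_ord p (farey_bar n) < 0))
       \<and> (\<forall>p::nat. prime p \<longrightarrow> rat_ord p (farey_bar p) = int p - 1 \<and> int p - 1 > 0)
       \<and> rat_ord 2 (farey_bar 7) = -1
       \<and> (\<forall>p::nat. prime p \<and> odd p \<longrightarrow>
            rat_ord p (farey_bar (3 * p - 1)) = - ((int p - 1) div 2))
       \<and> (\<forall>p::nat. prime p \<and> odd p \<longrightarrow>
            (\<forall>n::nat. 8 * p \<le> 3 * n \<and> n \<le> 3 * p - 1 \<longrightarrow> rat_ord p (farey_bar n) < 0))"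
proof -
  have pos: "\<exists>n. n \<ge> 1 \<and> rat_ord p (farey_bar n) > 0" if "prime p" for p
    using rat_ord_farey_bar_self[OF that] prime_gt_1_nat[OF that] by (intro exI[of _ p]) simp
  have "rat_ord p (farey_bar n) < 0"
    if "prime p \<and> odd p" "8 * p \<le> 3 * n \<and> n \<le> 3 * p - 1" for p n
    using that odd_prime_ge_3[of p] by (intro rat_ord_farey_bar_neg) auto
  then show ?thesis
    using pos ex_rat_ord_farey_bar_neg rat_ord_farey_bar_self prime_gt_1_nat rat_ord_2_farey_bar_7
      rat_ord_farey_bar_3p_minus_1 by auto
qed

end
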